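(* Let $A=(a_{jk})\in\mathbb C^{6\times 6}$ be a hermitian matrix such that $\bar zAz^T\geq 0$ for all $z\in\mathbb C^6$ with $z_1z_6+z_2z_5+z_3z_4=0$. Then $$\sum_{j,k=1}^{6}a_{jk}\,a_{7-j,7-k}\geq 0.$$ *)

theory Defs
  imports "HOL-Analysis.Analysis" "HOL-Library.Complex_Order"
begin

end

theory Submission
  imports Defs
begin

(*
  Let J be the reversal permutation (J z)_j = z_(7-j), so that z_1 z_6 + z_2 z_5 + z_3 z_4 = 0
  says z^T J z = 0, and put B = J conj(A) J. Both R = (A + B)/2 and H = (A - B)/2 are Hermitian,
  R is invariant and H changes sign under X |-> J conj(X) J, and the sum in question is
  sum_jk A_jk conj(B_jk) = |R|^2 - |H|^2 in the Frobenius norm.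
  If H u = l u with |u| = 1 and l ~= 0, then J conj(u) is an eigenvector for -l, hence orthogonal
  to u; this says u^T J u = 0, and J conj(u) is isotropic as well. The hypothesis applied to u and
  to J conj(u) gives <u, R u> + l >= 0 and <u, R u> - l >= 0, so |l| <= <u, R u>. Summing over an
  orthonormal eigenbasis of H and using Bessel's inequality for the rows of R,
  |H|^2 = sum l^2 <= sum <u, R u>^2 <= |R|^2.
*)

lemma linear_le_quadratic_imp_zero:
  fixes a b :: real
  assumes "\<And>t. a * t + b * t\<^sup>2 \<le> 0"
  shows "a = 0"
proof (rule ccontr)
  assume "a \<noteq> 0"
  define t where "t = a / (\<bar>b\<bar> + 1)"
  have a: "a = (\<bar>b\<bar> + 1) * t"
    unfolding t_def by (simp add: add_nonneg_pos)
  have "b * t\<^sup>2 \<ge> - \<bar>b\<bar> * t\<^sup>2"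
    using mult_right_mono[of "- \<bar>b\<bar>" b "t\<^sup>2"] by simp
  moreover have "a * t - \<bar>b\<bar> * t\<^sup>2 = t\<^sup>2"
    unfolding a by (simp add: power2_eq_square algebra_simps)
  moreover have "t\<^sup>2 > 0"
    using \<open>a \<noteq> 0\<close> a by auto
  ultimately show False
    using assms[of t] by linarith
qed

section \<open>Hermitian forms on a finite index set\<close>

text \<open>Vectors and matrices are total functions, of which only the values on the finite index
  set \<open>I\<close> matter.\<close>

type_synonym 'i cvec = "'i \<Rightarrow> complex"
type_synonym 'i cmat = "'i \<Rightarrow> 'i \<Rightarrow> complex"

locale finite_coords =
  fixes I :: "'i set"
  assumes finite_I [simp]: "finite I"
begin

definition cinner :: "'i cvec \<Rightarrow> 'i cvec \<Rightarrow> complex" where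
  "cinner u v = (\<Sum>i\<in>I. cnj (u i) * v i)"

definition mat_vec :: "'i cmat \<Rightarrow> 'i cvec \<Rightarrow> 'i cvec" where
  "mat_vec H v = (\<lambda>i. \<Sum>j\<in>I. H i j * v j)"

definition qform :: "'i cmat \<Rightarrow> 'i cvec \<Rightarrow> complex" where
  "qform H v = cinner v (mat_vec H v)"

definition hermitian :: "'i cmat \<Rightarrow> bool" where
  "hermitian H \<longleftrightarrow> (\<forall>i\<in>I. \<forall>j\<in>I. H j i = cnj (H i j))"

definition eigvec :: "'i cmat \<Rightarrow> real \<Rightarrow> 'i cvec \<Rightarrow> bool" where
  "eigvec H l v \<longleftrightarrow> (\<forall>i\<in>I. mat_vec H v i = of_real l * v i)"

definition orthonormal :: "'i cvec list \<Rightarrow> bool" where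
  "orthonormal L \<longleftrightarrow>
     (\<forall>a<length L. \<forall>b<length L. cinner (L!a) (L!b) = (if a = b then 1 else 0))"

definition frob_sq :: "'i cmat \<Rightarrow> real" where
  "frob_sq H = (\<Sum>i\<in>I. \<Sum>j\<in>I. (cmod (H i j))\<^sup>2)"

definition basis_vec :: "'i \<Rightarrow> 'i cvec" where
  "basis_vec k = (\<lambda>i. if i = k then 1 else 0)"

lemma basis_vec_self [simp]: "basis_vec k k = 1"
  by (simp add: basis_vec_def)

lemma cnj_cinner: "cnj (cinner u v) = cinner v u"
  by (simp add: cinner_def mult.commute)

lemma cinner_self: "cinner v v = of_real (\<Sum>i\<in>I. (cmod (v i))\<^sup>2)"
  unfolding cinner_def of_real_sum
  by (intro sum.cong refl) (simp only: of_real_power[symmetric] complex_norm_square mult.commute)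

lemma Re_cinner_self: "Re (cinner v v) = (\<Sum>i\<in>I. (cmod (v i))\<^sup>2)"
  by (simp add: cinner_self)

lemma cinner_self_nonneg: "0 \<le> Re (cinner v v)"
  by (simp add: Re_cinner_self sum_nonneg)

lemma cinner_self_real: "cinner v v = of_real (Re (cinner v v))"
  by (simp add: cinner_self)

lemma cinner_self_eq_0D: "Re (cinner v v) = 0 \<Longrightarrow> i \<in> I \<Longrightarrow> v i = 0"
  unfolding Re_cinner_self by (subst (asm) sum_nonneg_eq_0_iff) auto

lemma cinner_cong:
  "(\<And>i. i \<in> I \<Longrightarrow> u i = u' i) \<Longrightarrow> (\<And>i. i \<in> I \<Longrightarrow> v i = v' i) \<Longrightarrow>
   cinner u v = cinner u' v'"
  unfolding cinner_def by (rule sum.cong) auto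

lemma cinner_add_left: "cinner (\<lambda>i. u i + v i) w = cinner u w + cinner v w"
  unfolding cinner_def by (simp add: distrib_right sum.distrib)

lemma cinner_add_right: "cinner w (\<lambda>i. u i + v i) = cinner w u + cinner w v"
  unfolding cinner_def by (simp add: distrib_left sum.distrib)

lemma cinner_diff_left: "cinner (\<lambda>i. u i - v i) w = cinner u w - cinner v w"
  unfolding cinner_def by (simp add: left_diff_distrib sum_subtractf)

lemma cinner_diff_right: "cinner w (\<lambda>i. u i - v i) = cinner w u - cinner w v"
  unfolding cinner_def by (simp add: right_diff_distrib sum_subtractf)

lemma cinner_scale_left: "cinner (\<lambda>i. c * v i) w = cnj c * cinner v w"
  unfolding cinner_def by (simp add: sum_distrib_left mult_ac)

lemma cinner_scale_right: "cinner w (\<lambda>i. c * v i) = c * cinner w v"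
  unfolding cinner_def by (simp add: sum_distrib_left mult_ac)

lemma cinner_sum_left:
  "cinner (\<lambda>i. \<Sum>a\<in>A. c a * w a i) u = (\<Sum>a\<in>A. cnj (c a) * cinner (w a) u)"
  unfolding cinner_def by (simp add: sum_distrib_left sum_distrib_right mult_ac sum.swap[of _ A])

lemma cinner_sum_right:
  "cinner u (\<lambda>i. \<Sum>a\<in>A. c a * w a i) = (\<Sum>a\<in>A. c a * cinner u (w a))"
  unfolding cinner_def by (simp add: sum_distrib_left sum_distrib_right mult_ac sum.swap[of _ A])

lemma cinner_basis_vec_left: "k \<in> I \<Longrightarrow> cinner (basis_vec k) v = v k"
  by (simp add: cinner_def basis_vec_def if_distrib[of cnj] if_distrib[of "\<lambda>x. x * _"] cong: if_cong)

lemma cinner_basis_vec_right: "k \<in> I \<Longrightarrow> cinner v (basis_vec k) = cnj (v k)"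
  by (simp add: cinner_def basis_vec_def if_distrib cong: if_cong)

lemma mat_vec_cong:
  "(\<And>j. j \<in> I \<Longrightarrow> X i j = Y i j) \<Longrightarrow> (\<And>j. j \<in> I \<Longrightarrow> v j = w j) \<Longrightarrow>
   mat_vec X v i = mat_vec Y w i"
  unfolding mat_vec_def by (rule sum.cong) auto

lemma qform_cong:
  "(\<And>i j. i \<in> I \<Longrightarrow> j \<in> I \<Longrightarrow> X i j = Y i j) \<Longrightarrow> (\<And>i. i \<in> I \<Longrightarrow> v i = w i) \<Longrightarrow>
   qform X v = qform Y w"
  unfolding qform_def by (rule cinner_cong) (auto intro: mat_vec_cong)

lemma mat_vec_add: "mat_vec H (\<lambda>i. u i + v i) = (\<lambda>i. mat_vec H u i + mat_vec H v i)"
  unfolding mat_vec_def by (simp add: distrib_left sum.distrib)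

lemma mat_vec_scale: "mat_vec H (\<lambda>i. c * v i) = (\<lambda>i. c * mat_vec H v i)"
  unfolding mat_vec_def by (simp add: sum_distrib_left mult_ac)

lemma mat_vec_basis_vec: "k \<in> I \<Longrightarrow> mat_vec H (basis_vec k) i = H i k"
  by (simp add: mat_vec_def basis_vec_def if_distrib cong: if_cong)

lemma qform_add_matrix: "qform (\<lambda>i j. X i j + Y i j) v = qform X v + qform Y v"
proof -
  have "mat_vec (\<lambda>i j. X i j + Y i j) v = (\<lambda>i. mat_vec X v i + mat_vec Y v i)"
    unfolding mat_vec_def by (simp add: distrib_right sum.distrib)
  then show ?thesis
    unfolding qform_def by (simp add: cinner_add_right)
qed

lemma qform_neg_matrix: "qform (\<lambda>i j. - X i j) v = - qform X v"
  unfolding qform_def mat_vec_def cinner_def by (simp add: sum_negf)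

lemma qform_scale: "qform H (\<lambda>i. c * v i) = cnj c * c * qform H v"
  unfolding qform_def mat_vec_scale cinner_scale_left cinner_scale_right by simp

lemma qform_add_scale:
  "qform H (\<lambda>i. v i + c * w i) =
     qform H v + c * cinner v (mat_vec H w) + cnj c * cinner w (mat_vec H v) + cnj c * c * qform H w"
  unfolding qform_def mat_vec_add mat_vec_scale cinner_add_left cinner_add_right
    cinner_scale_left cinner_scale_right
  by (simp add: algebra_simps)

lemma hermitianI: "(\<And>i j. i \<in> I \<Longrightarrow> j \<in> I \<Longrightarrow> H j i = cnj (H i j)) \<Longrightarrow> hermitian H"
  unfolding hermitian_def by blast

lemma hermitianD: "hermitian H \<Longrightarrow> i \<in> I \<Longrightarrow> j \<in> I \<Longrightarrow> cnj (H i j) = H j i"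
  unfolding hermitian_def by metis

lemma hermitian_cinner_mat_vec:
  assumes "hermitian H"
  shows "cinner u (mat_vec H v) = cinner (mat_vec H u) v"
proof -
  have "cinner u (mat_vec H v) = (\<Sum>i\<in>I. \<Sum>j\<in>I. cnj (u i) * (H i j * v j))"
    unfolding cinner_def mat_vec_def by (simp add: sum_distrib_left)
  also have "\<dots> = (\<Sum>j\<in>I. \<Sum>i\<in>I. cnj (u i) * (H i j * v j))"
    by (rule sum.swap)
  also have "\<dots> = (\<Sum>j\<in>I. \<Sum>i\<in>I. cnj (H j i * u i) * v j)"
    by (intro sum.cong refl) (simp add: hermitianD[OF assms])
  also have "\<dots> = cinner (mat_vec H u) v"
    unfolding cinner_def mat_vec_def by (simp add: sum_distrib_right)
  finally show ?thesis .
qed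

lemma hermitian_qform_real:
  assumes "hermitian H"
  shows "qform H v = of_real (Re (qform H v))"
proof -
  have "cnj (qform H v) = qform H v"
    unfolding qform_def cnj_cinner hermitian_cinner_mat_vec[OF assms] ..
  then show ?thesis
    by (metis Reals_cnj_iff complex_is_Real_iff of_real_Re)
qed

lemma cinner_eigvec_right: "eigvec H l v \<Longrightarrow> cinner u (mat_vec H v) = of_real l * cinner u v"
  unfolding eigvec_def cinner_def by (simp add: sum_distrib_left mult_ac)

lemma eigvec_orthogonal:
  assumes "hermitian H" "eigvec H l u" "eigvec H m v" "l \<noteq> m"
  shows "cinner u v = 0"
proof -
  have "of_real m * cinner u v = cinner u (mat_vec H v)"
    using cinner_eigvec_right[OF assms(3)] ..
  also have "\<dots> = cnj (cinner v (mat_vec H u))"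
    by (simp add: hermitian_cinner_mat_vec[OF assms(1)] cnj_cinner)
  also have "\<dots> = of_real l * cinner u v"
    by (simp add: cinner_eigvec_right[OF assms(2)] cnj_cinner)
  finally show ?thesis
    using assms(4) by simp
qed

lemma bessel_inequality:
  assumes "orthonormal L"
  shows "(\<Sum>a<length L. (cmod (cinner (L!a) x))\<^sup>2) \<le> Re (cinner x x)"
proof -
  define c where "c a = cinner (L!a) x" for a
  define s where "s = (\<lambda>i. \<Sum>a<length L. c a * (L!a) i)"
  define N where "N = (\<Sum>a<length L. cnj (c a) * c a)"
  have on: "\<And>a b. a < length L \<Longrightarrow> b < length L \<Longrightarrow> cinner (L!a) (L!b) = (if a = b then 1 else 0)"
    using assms unfolding orthonormal_def by blast
  have xs: "cinner x s = N"
    unfolding s_def cinner_sum_right N_def c_def by (simp add: cnj_cinner mult.commute)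
  have sx: "cinner s x = N"
    unfolding s_def cinner_sum_left N_def c_def ..
  have "cinner s s = (\<Sum>a<length L. cnj (c a) * (\<Sum>b<length L. c b * cinner (L!a) (L!b)))"
    unfolding s_def cinner_sum_left cinner_sum_right ..
  also have "\<dots> = N"
    unfolding N_def by (intro sum.cong refl) (simp add: on if_distrib cong: if_cong)
  finally have ss: "cinner s s = N" .
  have "cinner (\<lambda>i. x i - s i) (\<lambda>i. x i - s i) = cinner x x - N"
    unfolding cinner_diff_left cinner_diff_right xs sx ss by simp
  moreover have "Re N = (\<Sum>a<length L. (cmod (c a))\<^sup>2)"
    unfolding N_def by (simp add: mult.commute complex_mult_cnj cmod_power2)
  ultimately show ?thesis
    using cinner_self_nonneg[of "\<lambda>i. x i - s i"] unfolding c_def by simp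
qed

lemma orthonormal_length_le:
  assumes "orthonormal L"
  shows "length L \<le> card I"
proof -
  have unit: "(\<Sum>k\<in>I. (cmod ((L!a) k))\<^sup>2) = 1" if "a < length L" for a
    using assms that Re_cinner_self[of "L!a"] unfolding orthonormal_def by auto
  have "real (length L) = (\<Sum>a<length L. \<Sum>k\<in>I. (cmod ((L!a) k))\<^sup>2)"
    by (simp add: unit)
  also have "\<dots> = (\<Sum>k\<in>I. \<Sum>a<length L. (cmod (cinner (L!a) (basis_vec k)))\<^sup>2)"
    by (subst sum.swap) (simp add: cinner_basis_vec_right)
  also have "\<dots> \<le> (\<Sum>k\<in>I. Re (cinner (basis_vec k) (basis_vec k)))"
    by (intro sum_mono bessel_inequality[OF assms])
  also have "\<dots> = real (card I)"
    by (simp add: cinner_basis_vec_left)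
  finally show ?thesis by simp
qed

lemma orthonormal_Cons:
  assumes "orthonormal L" "cinner v v = 1" "\<And>w. w \<in> set L \<Longrightarrow> cinner v w = 0"
  shows "orthonormal (v # L)"
  unfolding orthonormal_def
proof (intro allI impI)
  fix a b assume ab: "a < length (v # L)" "b < length (v # L)"
  have "cinner w v = 0" if "w \<in> set L" for w
    using assms(3)[OF that] cnj_cinner[of v w] by simp
  with assms ab show "cinner ((v # L) ! a) ((v # L) ! b) = (if a = b then 1 else 0)"
    unfolding orthonormal_def by (cases a; cases b) auto
qed

lemma hermitian_eq_0_if_qform_eq_0:
  assumes "hermitian H" "\<And>v. qform H v = 0" "i \<in> I" "j \<in> I"
  shows "H i j = 0"
proof -
  have diag: "H k k = 0" if "k \<in> I" for k
    using assms(2)[of "basis_vec k"] that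
    by (simp add: qform_def cinner_basis_vec_left mat_vec_basis_vec)
  have expand: "qform H (\<lambda>k. basis_vec i k + c * basis_vec j k) = c * H i j + cnj c * H j i" for c
    using assms(3,4) diag
    by (simp add: qform_add_scale qform_def cinner_basis_vec_left mat_vec_basis_vec)
  have "H i j + H j i = 0" "\<i> * H i j - \<i> * H j i = 0"
    using expand[of 1] expand[of \<i>] assms(2) by simp_all
  then have "H i j - H j i = 0"
    by (simp add: right_diff_distrib[symmetric])
  with \<open>H i j + H j i = 0\<close> show ?thesis
    by (simp add: eq_neg_iff_add_eq_0[symmetric])
qed

subsection \<open>Eigenvectors from maximising the form\<close>

lemma qform_le_from_unit_vectors:
  assumes "\<And>w. cinner w w = 1 \<Longrightarrow> Re (qform H w) \<le> M"
  shows "Re (qform H w) \<le> M * Re (cinner w w)"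
proof (cases "Re (cinner w w) = 0")
  case True
  then have "qform H w = qform H (\<lambda>_. 0)"
    by (intro qform_cong refl) (simp add: cinner_self_eq_0D)
  then show ?thesis
    using True by (simp add: qform_def cinner_def)
next
  case False
  define s where "s = Re (cinner w w)"
  have s: "s > 0"
    using False cinner_self_nonneg[of w] unfolding s_def by linarith
  define c where "c = complex_of_real (1 / sqrt s)"
  have cc: "cnj c * c = of_real (1 / s)"
    using s by (simp add: c_def real_sqrt_mult[symmetric] flip: of_real_mult)
  have "cinner (\<lambda>i. c * w i) (\<lambda>i. c * w i) = cnj c * c * cinner w w"
    unfolding cinner_scale_left cinner_scale_right by (simp only: mult.assoc)
  also have "\<dots> = 1"
    using s cinner_self_real[of w] unfolding cc s_def[symmetric] by (simp flip: of_real_mult)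
  finally have "Re (qform H (\<lambda>i. c * w i)) \<le> M"
    by (rule assms)
  then have "Re (qform H w) / s \<le> M"
    unfolding qform_scale cc by simp
  then show ?thesis
    using s by (simp add: s_def[symmetric] divide_le_eq mult.commute)
qed

lemma exists_qform_maximizer:
  assumes "I \<noteq> {}"
  obtains v where "cinner v v = 1" "\<And>w. cinner w w = 1 \<Longrightarrow> Re (qform H w) \<le> Re (qform H v)"
proof -
  define B :: "'i cvec set" where "B = PiE UNIV (\<lambda>i. if i \<in> I then cball 0 1 else {0})"
  define S where "S = B \<inter> {v. (\<Sum>i\<in>I. (cmod (v i))\<^sup>2) = 1}"
  have "compactin (product_topology (\<lambda>_. euclidean) UNIV) B"
    unfolding B_def by (subst compactin_PiE) auto
  then have "compact B"
    by (simp add: euclidean_product_topology)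
  moreover have "closed {v :: 'i \<Rightarrow> complex. (\<Sum>i\<in>I. (cmod (v i))\<^sup>2) = 1}"
    by (intro closed_Collect_eq continuous_intros continuous_on_product_coordinates)
  ultimately have "compact S"
    unfolding S_def by blast
  have restrict_in_S: "(\<lambda>i. if i \<in> I then w i else 0) \<in> S" if "cinner w w = 1" for w
  proof -
    have norm1: "(\<Sum>i\<in>I. (cmod (w i))\<^sup>2) = 1"
      using that Re_cinner_self[of w] by simp
    have "cmod (w i) \<le> 1" if "i \<in> I" for i
    proof -
      have "(cmod (w i))\<^sup>2 \<le> 1"
        using member_le_sum[of i I "\<lambda>i. (cmod (w i))\<^sup>2"] that norm1 by simp
      then show ?thesis
        using abs_square_le_1[of "cmod (w i)"] by simp
    qed
    with norm1 show ?thesis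
      unfolding S_def B_def by (auto simp: dist_norm)
  qed
  obtain k where "k \<in> I"
    using assms by blast
  then have "cinner (basis_vec k) (basis_vec k) = 1"
    by (simp add: cinner_basis_vec_left)
  then have "S \<noteq> {}"
    using restrict_in_S by blast
  moreover have "continuous_on UNIV (\<lambda>v. Re (qform H v))"
    unfolding qform_def cinner_def mat_vec_def
    by (intro continuous_intros continuous_on_product_coordinates)
  then have "continuous_on S (\<lambda>v. Re (qform H v))"
    by (rule continuous_on_subset) simp
  ultimately obtain v where "v \<in> S" and v_max: "\<And>w. w \<in> S \<Longrightarrow> Re (qform H w) \<le> Re (qform H v)"
    using continuous_attains_sup[OF \<open>compact S\<close>] by blast
  show thesis
  proof
    show "cinner v v = 1"
      using \<open>v \<in> S\<close> cinner_self[of v] unfolding S_def by simp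
    fix w assume "cinner w w = 1"
    moreover have "qform H w = qform H (\<lambda>i. if i \<in> I then w i else 0)"
      by (rule qform_cong) auto
    ultimately show "Re (qform H w) \<le> Re (qform H v)"
      using v_max restrict_in_S by simp
  qed
qed

lemma mat_vec_shift:
  "i \<in> I \<Longrightarrow> mat_vec (\<lambda>i j. H i j - (if i = j then of_real M else 0)) v i = mat_vec H v i - of_real M * v i"
  unfolding mat_vec_def by (simp add: left_diff_distrib sum_subtractf if_distrib[of "\<lambda>x. x * _"] cong: if_cong)

lemma qform_shift:
  "qform (\<lambda>i j. H i j - (if i = j then of_real M else 0)) v = qform H v - of_real M * cinner v v"
proof -
  have "qform (\<lambda>i j. H i j - (if i = j then of_real M else 0)) v = cinner v (\<lambda>i. mat_vec H v i - of_real M * v i)"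
    unfolding qform_def by (rule cinner_cong) (simp_all add: mat_vec_shift)
  then show ?thesis
    unfolding cinner_diff_right cinner_scale_right qform_def .
qed

lemma hermitian_shift: "hermitian H \<Longrightarrow> hermitian (\<lambda>i j. H i j - (if i = j then of_real M else 0))"
  by (intro hermitianI) (auto simp: hermitianD)

text \<open>A negative semidefinite form vanishing at \<open>v\<close> attains its maximum there, so the
  first variation \<open>Re (cinner w (mat_vec K v))\<close> vanishes in every direction \<open>w\<close>.\<close>

lemma qform_nonpos_zero_imp_kernel:
  assumes "hermitian K" "\<And>w. Re (qform K w) \<le> 0" "Re (qform K v) = 0"
  shows "eigvec K 0 v"
proof -
  have first_variation: "Re (cinner w (mat_vec K v)) = 0" for w
  proof -
    have "(2 * Re (cinner w (mat_vec K v))) * t + Re (qform K w) * t\<^sup>2 \<le> 0" for t :: real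
    proof -
      have "cinner v (mat_vec K w) = cnj (cinner w (mat_vec K v))"
        by (simp add: hermitian_cinner_mat_vec[OF assms(1)] cnj_cinner)
      then have "Re (qform K (\<lambda>i. v i + of_real t * w i)) =
          Re (qform K v) + 2 * t * Re (cinner w (mat_vec K v)) + t\<^sup>2 * Re (qform K w)"
        by (simp add: qform_add_scale power2_eq_square)
      then show ?thesis
        using assms(2)[of "\<lambda>i. v i + of_real t * w i"] assms(3) by (simp add: algebra_simps)
    qed
    then show ?thesis
      using linear_le_quadratic_imp_zero by fastforce
  qed
  show ?thesis
    unfolding eigvec_def using cinner_self_eq_0D[OF first_variation] by simp
qed

lemma hermitian_max_eigvec:
  assumes "hermitian H" "I \<noteq> {}"
  obtains v M where "cinner v v = 1" "eigvec H M v" "\<And>w. Re (qform H w) \<le> M * Re (cinner w w)"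
proof -
  obtain v where v: "cinner v v = 1" and v_max: "\<And>w. cinner w w = 1 \<Longrightarrow> Re (qform H w) \<le> Re (qform H v)"
    using exists_qform_maximizer[OF assms(2)] by blast
  define M where "M = Re (qform H v)"
  have bound: "Re (qform H w) \<le> M * Re (cinner w w)" for w
    unfolding M_def using v_max by (rule qform_le_from_unit_vectors)
  define K where "K = (\<lambda>i j. H i j - (if i = j then of_real M else 0))"
  have "eigvec K 0 v"
  proof (rule qform_nonpos_zero_imp_kernel)
    show "hermitian K"
      unfolding K_def by (rule hermitian_shift[OF assms(1)])
    show "Re (qform K w) \<le> 0" for w
      using bound[of w] cinner_self_real[of w] unfolding K_def qform_shift
      by (metis Re_complex_of_real diff_le_0_iff_le minus_complex.simps(1) of_real_mult)
    show "Re (qform K v) = 0"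
      unfolding K_def qform_shift v M_def by simp
  qed
  then have "eigvec H M v"
    unfolding eigvec_def K_def by (simp add: mat_vec_shift)
  then show thesis
    using that v bound by blast
qed

lemma hermitian_neg: "hermitian H \<Longrightarrow> hermitian (\<lambda>i j. - H i j)"
  by (intro hermitianI) (auto simp: hermitianD)

lemma eigvec_neg: "eigvec (\<lambda>i j. - H i j) l v \<longleftrightarrow> eigvec H (- l) v"
  unfolding eigvec_def mat_vec_def by (auto simp: sum_negf minus_equation_iff)

lemma hermitian_nonzero_eigvec:
  assumes "hermitian H" "i \<in> I" "j \<in> I" "H i j \<noteq> 0"
  obtains v l where "cinner v v = 1" "l \<noteq> 0" "eigvec H l v"
proof -
  have "I \<noteq> {}"
    using assms(2) by blast
  obtain v1 M1 where v1: "cinner v1 v1 = 1" "eigvec H M1 v1"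
    and max1: "\<And>w. Re (qform H w) \<le> M1 * Re (cinner w w)"
    using hermitian_max_eigvec[OF assms(1) \<open>I \<noteq> {}\<close>] by blast
  obtain v2 M2 where v2: "cinner v2 v2 = 1" "eigvec H (- M2) v2"
    and max2: "\<And>w. - Re (qform H w) \<le> M2 * Re (cinner w w)"
    using hermitian_max_eigvec[OF hermitian_neg[OF assms(1)] \<open>I \<noteq> {}\<close>]
    unfolding eigvec_neg qform_neg_matrix by (metis uminus_complex.sel(1))
  consider "M1 \<noteq> 0" | "M2 \<noteq> 0" | "M1 = 0" "M2 = 0"
    by blast
  then show thesis
  proof cases
    case 1
    with v1 show thesis
      using that by blast
  next
    case 2
    with v2 show thesis by (intro that[of v2 "- M2"]) simp_all
  next
    case 3
    have "qform H w = 0" for w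
      using max1[of w] max2[of w] 3 hermitian_qform_real[OF assms(1), of w] by simp
    then have "H i j = 0"
      using hermitian_eq_0_if_qform_eq_0[OF assms(1) _ assms(2,3)] by blast
    with assms(4) show thesis ..
  qed
qed

subsection \<open>Spectral decomposition\<close>

definition deflate :: "'i cmat \<Rightarrow> real \<Rightarrow> 'i cvec \<Rightarrow> 'i cmat" where
  "deflate H l v = (\<lambda>i j. H i j - of_real l * v i * cnj (v j))"

lemma hermitian_deflate: "hermitian H \<Longrightarrow> hermitian (deflate H l v)"
  unfolding deflate_def by (intro hermitianI) (simp add: hermitianD mult_ac)

lemma mat_vec_deflate: "mat_vec (deflate H l v) w i = mat_vec H w i - of_real l * v i * cinner v w"
proof -
  have "deflate H l v i j * w j = H i j * w j - (of_real l * v i) * (cnj (v j) * w j)" for j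
    unfolding deflate_def by (simp add: algebra_simps)
  then show ?thesis
    unfolding mat_vec_def cinner_def sum_distrib_left by (simp add: sum_subtractf)
qed

lemma eigvec_deflate_self: "cinner v v = 1 \<Longrightarrow> eigvec H l v \<Longrightarrow> eigvec (deflate H l v) 0 v"
  unfolding eigvec_def by (simp add: mat_vec_deflate)

lemma eigvec_deflate_iff: "cinner v w = 0 \<Longrightarrow> eigvec (deflate H l v) m w \<longleftrightarrow> eigvec H m w"
  unfolding eigvec_def by (simp add: mat_vec_deflate)

lemma qform_eigvec: "eigvec H l v \<Longrightarrow> qform H v = of_real l * cinner v v"
  unfolding qform_def by (rule cinner_eigvec_right)

lemma frob_sq_eq_sum: "of_real (frob_sq X) = (\<Sum>i\<in>I. \<Sum>j\<in>I. X i j * cnj (X i j))"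
  unfolding frob_sq_def of_real_sum
  by (intro sum.cong refl) (simp only: of_real_power[symmetric] complex_norm_square)

lemma frob_sq_deflate:
  assumes "hermitian H" "cinner v v = 1" "eigvec H l v"
  shows "frob_sq (deflate H l v) = frob_sq H - l\<^sup>2"
proof -
  let ?L = "complex_of_real l"
  have "qform H v = ?L"
    using qform_eigvec[OF assms(3)] assms(2) by simp
  then have qv: "(\<Sum>i\<in>I. \<Sum>j\<in>I. cnj (v i) * (H i j * v j)) = ?L"
    by (simp add: qform_def cinner_def mat_vec_def sum_distrib_left)
  have qv_cnj: "(\<Sum>i\<in>I. \<Sum>j\<in>I. v i * (cnj (H i j) * cnj (v j))) = ?L"
    using arg_cong[OF qv, of cnj] by simp
  have "(\<Sum>i\<in>I. v i * cnj (v i)) = 1"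
    using assms(2) by (simp add: cinner_def mult.commute)
  then have vv: "(\<Sum>i\<in>I. \<Sum>j\<in>I. (v i * cnj (v i)) * (v j * cnj (v j))) = 1"
    unfolding sum_product[symmetric] by simp
  have "of_real (frob_sq (deflate H l v)) =
      (\<Sum>i\<in>I. \<Sum>j\<in>I. H i j * cnj (H i j)) - ?L * (\<Sum>i\<in>I. \<Sum>j\<in>I. cnj (v i) * (H i j * v j))
      - ?L * (\<Sum>i\<in>I. \<Sum>j\<in>I. v i * (cnj (H i j) * cnj (v j)))
      + ?L * ?L * (\<Sum>i\<in>I. \<Sum>j\<in>I. (v i * cnj (v i)) * (v j * cnj (v j)))"
    unfolding frob_sq_eq_sum deflate_def
    by (simp add: algebra_simps sum.distrib sum_subtractf sum_distrib_left)
  also have "\<dots> = of_real (frob_sq H - l\<^sup>2)"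
    unfolding qv qv_cnj vv frob_sq_eq_sum[symmetric] by (simp add: power2_eq_square)
  finally show ?thesis
    by (simp only: of_real_eq_iff)
qed

definition nonzero_eigenpairs :: "'i cmat \<Rightarrow> 'i cvec list \<Rightarrow> real list \<Rightarrow> bool" where
  "nonzero_eigenpairs H us ls \<longleftrightarrow> length us = length ls \<and> orthonormal us \<and>
     (\<forall>a<length us. ls!a \<noteq> 0 \<and> eigvec H (ls!a) (us!a))"

text \<open>Deflate one eigenvector with non-zero eigenvalue at a time. The deflated vectors join
  the orthonormal list \<open>K\<close> of kernel vectors, whose length is bounded by \<open>card I\<close>.\<close>

lemma hermitian_spectral_kernel:
  assumes "hermitian H" "orthonormal K" "\<And>w. w \<in> set K \<Longrightarrow> eigvec H 0 w"
  shows "\<exists>us ls. nonzero_eigenpairs H us ls \<and> frob_sq H = (\<Sum>a<length ls. (ls!a)\<^sup>2)"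
  using assms
proof (induction "card I - length K" arbitrary: H K rule: less_induct)
  case less
  show ?case
  proof (cases "\<exists>i\<in>I. \<exists>j\<in>I. H i j \<noteq> 0")
    case False
    then have "frob_sq H = 0"
      unfolding frob_sq_def by simp
    then show ?thesis
      by (intro exI[of _ "[]"]) (simp add: nonzero_eigenpairs_def orthonormal_def)
  next
    case True
    then obtain v l where v: "cinner v v = 1" "l \<noteq> 0" "eigvec H l v"
      using hermitian_nonzero_eigvec[OF less.prems(1)] by metis
    have v_perp: "cinner v w = 0" if "w \<in> set K" for w
      using eigvec_orthogonal[OF less.prems(1) v(3) less.prems(3)[OF that]] v(2) by simp
    have vK: "orthonormal (v # K)"
      using orthonormal_Cons[OF less.prems(2) v(1) v_perp] .
    define H' where "H' = deflate H l v"
    have "\<exists>us ls. nonzero_eigenpairs H' us ls \<and> frob_sq H' = (\<Sum>a<length ls. (ls!a)\<^sup>2)"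
    proof (rule less.hyps)
      show "card I - length (v # K) < card I - length K"
        using orthonormal_length_le[OF vK] by simp
      show "hermitian H'"
        unfolding H'_def by (rule hermitian_deflate[OF less.prems(1)])
      show "eigvec H' 0 w" if "w \<in> set (v # K)" for w
        using that eigvec_deflate_self[OF v(1,3)] eigvec_deflate_iff[OF v_perp] less.prems(3)
        unfolding H'_def by auto
    qed (rule vK)
    then obtain us ls where us: "length us = length ls" "orthonormal us"
      "\<And>a. a < length us \<Longrightarrow> ls!a \<noteq> 0 \<and> eigvec H' (ls!a) (us!a)"
      and frob': "frob_sq H' = (\<Sum>a<length ls. (ls!a)\<^sup>2)"
      unfolding nonzero_eigenpairs_def by blast
    have perp: "cinner v (us!a) = 0" if "a < length us" for a
      using eigvec_orthogonal[OF _ eigvec_deflate_self[OF v(1,3)]] us(3)[OF that]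
        hermitian_deflate[OF less.prems(1)] unfolding H'_def by metis
    have eig: "eigvec H (ls!a) (us!a)" if "a < length us" for a
      using us(3)[OF that] eigvec_deflate_iff[OF perp[OF that]] unfolding H'_def by simp
    have "orthonormal (v # us)"
      using orthonormal_Cons[OF us(2) v(1)] perp by (metis in_set_conv_nth)
    moreover have "frob_sq H = (\<Sum>a<length (l # ls). ((l # ls)!a)\<^sup>2)"
      using frob' frob_sq_deflate[OF less.prems(1) v(1,3)] unfolding H'_def
      by (simp add: sum.lessThan_Suc_shift del: sum.lessThan_Suc)
    moreover have "\<forall>a<length (v # us). (l # ls)!a \<noteq> 0 \<and> eigvec H ((l # ls)!a) ((v # us)!a)"
      using v us(3) eig by (auto simp: nth_Cons split: nat.split)
    ultimately show ?thesis
      using us(1) unfolding nonzero_eigenpairs_def by (intro exI[of _ "v # us"] exI[of _ "l # ls"]) simp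
  qed
qed

theorem hermitian_spectral:
  assumes "hermitian H"
  obtains us ls where "nonzero_eigenpairs H us ls" "frob_sq H = (\<Sum>a<length ls. (ls!a)\<^sup>2)"
  using hermitian_spectral_kernel[OF assms, of "[]"] by (auto simp: orthonormal_def)

lemma sum_sq_qform_le_frob_sq:
  assumes "orthonormal us"
  shows "(\<Sum>a<length us. (Re (qform R (us!a)))\<^sup>2) \<le> frob_sq R"
proof -
  define r where "r i = (\<lambda>j. cnj (R i j))" for i
  have row: "mat_vec R u i = cnj (cinner u (r i))" for u i
    unfolding mat_vec_def cinner_def r_def by (simp add: mult.commute)
  have "(Re (qform R u))\<^sup>2 \<le> (\<Sum>i\<in>I. (cmod (cinner u (r i)))\<^sup>2)" if "cinner u u = 1" for u
  proof -
    have "(Re (qform R u))\<^sup>2 \<le> (cmod (qform R u))\<^sup>2"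
      by (metis abs_Re_le_cmod abs_le_square_iff abs_norm_cancel)
    also have "\<dots> \<le> Re (cinner (mat_vec R u) (mat_vec R u))"
      using bessel_inequality[of "[u]" "mat_vec R u"] that
      by (simp add: orthonormal_def qform_def)
    also have "\<dots> = (\<Sum>i\<in>I. (cmod (cinner u (r i)))\<^sup>2)"
      unfolding Re_cinner_self row by simp
    finally show ?thesis .
  qed
  then have "(\<Sum>a<length us. (Re (qform R (us!a)))\<^sup>2) \<le>
      (\<Sum>a<length us. \<Sum>i\<in>I. (cmod (cinner (us!a) (r i)))\<^sup>2)"
    using assms by (intro sum_mono) (auto simp: orthonormal_def)
  also have "\<dots> = (\<Sum>i\<in>I. \<Sum>a<length us. (cmod (cinner (us!a) (r i)))\<^sup>2)"
    by (rule sum.swap)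
  also have "\<dots> \<le> (\<Sum>i\<in>I. Re (cinner (r i) (r i)))"
    by (intro sum_mono bessel_inequality[OF assms])
  also have "\<dots> = frob_sq R"
    unfolding frob_sq_def Re_cinner_self r_def by simp
  finally show ?thesis .
qed

lemma frob_sq_le_if_abs_eigval_le_qform:
  assumes "hermitian H"
    and "\<And>u l. cinner u u = 1 \<Longrightarrow> eigvec H l u \<Longrightarrow> l \<noteq> 0 \<Longrightarrow> \<bar>l\<bar> \<le> Re (qform R u)"
  shows "frob_sq H \<le> frob_sq R"
proof -
  obtain us ls where "nonzero_eigenpairs H us ls" and frob_H: "frob_sq H = (\<Sum>a<length ls. (ls!a)\<^sup>2)"
    using hermitian_spectral[OF assms(1)] by blast
  then have us: "length us = length ls" "orthonormal us"
    "\<And>a. a < length us \<Longrightarrow> ls!a \<noteq> 0 \<and> eigvec H (ls!a) (us!a)"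
    unfolding nonzero_eigenpairs_def by blast+
  have "(ls!a)\<^sup>2 \<le> (Re (qform R (us!a)))\<^sup>2" if "a < length us" for a
  proof -
    have "\<bar>ls!a\<bar> \<le> Re (qform R (us!a))"
      using assms(2) us(2,3) that unfolding orthonormal_def by simp
    then show ?thesis
      using power_mono[of "\<bar>ls!a\<bar>" _ 2] by simp
  qed
  then have "frob_sq H \<le> (\<Sum>a<length us. (Re (qform R (us!a)))\<^sup>2)"
    unfolding frob_H us(1)[symmetric] by (intro sum_mono) simp
  also have "\<dots> \<le> frob_sq R"
    by (rule sum_sq_qform_le_frob_sq[OF us(2)])
  finally show ?thesis .
qed

end

section \<open>Reflection by an involution of the index set\<close>

locale coord_involution = finite_coords I for I :: "'i set" +
  fixes \<sigma> :: "'i \<Rightarrow> 'i"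
  assumes involution_mem: "i \<in> I \<Longrightarrow> \<sigma> i \<in> I"
    and involution_inv: "i \<in> I \<Longrightarrow> \<sigma> (\<sigma> i) = i"
begin

text \<open>With \<open>J\<close> the permutation matrix of \<open>\<sigma>\<close> and \<open>conj\<close> acting entrywise,
  \<open>conj_flip u\<close> is \<open>J (conj u)\<close> and \<open>conj_mirror X\<close> is \<open>J (conj X) J\<close>. A vector \<open>z\<close> is isotropic
  for the bilinear form \<open>z\<^sup>T J z\<close> iff \<open>cinner (conj_flip z) z = 0\<close>.\<close>

definition conj_flip :: "'i cvec \<Rightarrow> 'i cvec" where
  "conj_flip u = (\<lambda>i. cnj (u (\<sigma> i)))"

definition conj_mirror :: "'i cmat \<Rightarrow> 'i cmat" where
  "conj_mirror X = (\<lambda>i j. cnj (X (\<sigma> i) (\<sigma> j)))"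

lemma sum_involution: "(\<Sum>i\<in>I. f (\<sigma> i)) = (\<Sum>i\<in>I. f i)"
  by (rule sum.reindex_bij_witness[of _ \<sigma> \<sigma>]) (auto simp: involution_mem involution_inv)

lemma conj_mirror_conj_mirror: "i \<in> I \<Longrightarrow> j \<in> I \<Longrightarrow> conj_mirror (conj_mirror X) i j = X i j"
  by (simp add: conj_mirror_def involution_inv)

lemma hermitian_conj_mirror: "hermitian X \<Longrightarrow> hermitian (conj_mirror X)"
  unfolding conj_mirror_def by (intro hermitianI) (simp add: hermitianD involution_mem)

lemma mat_vec_conj_flip: "i \<in> I \<Longrightarrow> mat_vec X (conj_flip u) i = conj_flip (mat_vec (conj_mirror X) u) i"
  unfolding mat_vec_def conj_flip_def conj_mirror_def
  using sum_involution[of "\<lambda>j. X i j * cnj (u (\<sigma> j))"] by (simp add: involution_inv)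

lemma cinner_conj_flip: "cinner (conj_flip u) (conj_flip w) = cinner w u"
  unfolding cinner_def conj_flip_def
  using sum_involution[of "\<lambda>i. cnj (w i) * u i"] by (simp add: mult.commute)

lemma qform_conj_flip: "qform X (conj_flip u) = cnj (qform (conj_mirror X) u)"
proof -
  have "qform X (conj_flip u) = cinner (conj_flip u) (conj_flip (mat_vec (conj_mirror X) u))"
    unfolding qform_def by (rule cinner_cong) (simp_all add: mat_vec_conj_flip)
  then show ?thesis
    unfolding cinner_conj_flip qform_def cnj_cinner .
qed

lemma cinner_conj_flip_conj_flip: "cinner (conj_flip (conj_flip u)) (conj_flip u) = cnj (cinner (conj_flip u) u)"
  unfolding cinner_def conj_flip_def by (simp add: involution_inv mult.commute)

lemma eigvec_conj_flip:
  assumes "\<And>i j. i \<in> I \<Longrightarrow> j \<in> I \<Longrightarrow> conj_mirror H i j = - H i j" "eigvec H l u"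
  shows "eigvec H (- l) (conj_flip u)"
  unfolding eigvec_def
proof
  fix i assume "i \<in> I"
  then have "mat_vec (conj_mirror H) u (\<sigma> i) = - (of_real l * u (\<sigma> i))"
    using assms involution_mem unfolding eigvec_def mat_vec_def by (simp add: sum_negf)
  with \<open>i \<in> I\<close> show "mat_vec H (conj_flip u) i = of_real (- l) * conj_flip u i"
    by (simp add: mat_vec_conj_flip) (simp add: conj_flip_def)
qed

lemma eigvec_isotropic:
  assumes "hermitian H" "\<And>i j. i \<in> I \<Longrightarrow> j \<in> I \<Longrightarrow> conj_mirror H i j = - H i j"
    "eigvec H l u" "l \<noteq> 0"
  shows "cinner (conj_flip u) u = 0"
  using eigvec_orthogonal[OF assms(1) eigvec_conj_flip[OF assms(2,3)] assms(3)] assms(4) by simp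

lemma abs_eigval_le_qform:
  assumes "hermitian H" "\<And>i j. i \<in> I \<Longrightarrow> j \<in> I \<Longrightarrow> conj_mirror H i j = - H i j"
    and "\<And>i j. i \<in> I \<Longrightarrow> j \<in> I \<Longrightarrow> conj_mirror R i j = R i j"
    and nonneg: "\<And>z. cinner (conj_flip z) z = 0 \<Longrightarrow> 0 \<le> qform (\<lambda>i j. R i j + H i j) z"
    and "cinner u u = 1" "eigvec H l u" "l \<noteq> 0"
  shows "\<bar>l\<bar> \<le> Re (qform R u)"
proof -
  have iso: "cinner (conj_flip u) u = 0"
    by (rule eigvec_isotropic[OF assms(1,2,6,7)])
  have "qform H u = of_real l"
    using qform_eigvec[OF assms(6)] assms(5) by simp
  moreover have "qform (conj_mirror H) u = - qform H u"
    using assms(2) qform_cong[of "conj_mirror H" "\<lambda>i j. - H i j" u u] by (simp add: qform_neg_matrix)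
  moreover have "qform (conj_mirror R) u = qform R u"
    using assms(3) by (intro qform_cong) simp_all
  moreover have "0 \<le> qform (\<lambda>i j. R i j + H i j) u"
    using nonneg iso by simp
  moreover have "0 \<le> qform (\<lambda>i j. R i j + H i j) (conj_flip u)"
    using nonneg iso cinner_conj_flip_conj_flip[of u] by simp
  ultimately have "0 \<le> Re (qform R u) + l" "0 \<le> Re (qform R u) - l"
    by (auto simp: qform_add_matrix qform_conj_flip less_eq_complex_def)
  then show ?thesis
    by linarith
qed

lemma sum_pairing_eq_frob_sq_diff:
  assumes "hermitian R" "hermitian H"
  shows "(\<Sum>j\<in>I. \<Sum>k\<in>I. (R j k + H j k) * cnj (R j k - H j k)) = of_real (frob_sq R - frob_sq H)"
proof -
  have "(\<Sum>j\<in>I. \<Sum>k\<in>I. H j k * cnj (R j k)) = (\<Sum>k\<in>I. \<Sum>j\<in>I. R k j * cnj (H k j))"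
    by (subst sum.swap) (intro sum.cong refl, simp add: hermitianD[OF assms(1)] hermitianD[OF assms(2)])
  then show ?thesis
    by (simp add: frob_sq_eq_sum algebra_simps sum.distrib sum_subtractf)
qed

theorem reflected_pairing_nonneg:
  assumes "hermitian A" and nonneg: "\<And>z. cinner (conj_flip z) z = 0 \<Longrightarrow> 0 \<le> qform A z"
  shows "0 \<le> (\<Sum>j\<in>I. \<Sum>k\<in>I. A j k * A (\<sigma> j) (\<sigma> k))"
proof -
  define R where "R = (\<lambda>i j. (A i j + conj_mirror A i j) / 2)"
  define H where "H = (\<lambda>i j. (A i j - conj_mirror A i j) / 2)"
  have "hermitian R" "hermitian H"
    unfolding R_def H_def using hermitian_conj_mirror[OF assms(1)]
    by (auto intro!: hermitianI simp: hermitianD[OF assms(1)] hermitianD)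
  have RH: "R j k + H j k = A j k" "cnj (R j k - H j k) = A (\<sigma> j) (\<sigma> k)" for j k
    unfolding R_def H_def conj_mirror_def by (simp_all add: field_simps)
  then have A: "A = (\<lambda>i j. R i j + H i j)"
    by simp
  have R_sym: "conj_mirror R i j = R i j" and H_skew: "conj_mirror H i j = - H i j"
    if "i \<in> I" "j \<in> I" for i j
    using conj_mirror_conj_mirror[OF that, of A] unfolding R_def H_def
    by (simp_all add: conj_mirror_def field_simps)
  have pairing: "(\<Sum>j\<in>I. \<Sum>k\<in>I. A j k * A (\<sigma> j) (\<sigma> k)) = of_real (frob_sq R - frob_sq H)"
    unfolding sum_pairing_eq_frob_sq_diff[OF \<open>hermitian R\<close> \<open>hermitian H\<close>, symmetric]
    by (simp only: RH)
  have "frob_sq H \<le> frob_sq R"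
  proof (rule frob_sq_le_if_abs_eigval_le_qform[OF \<open>hermitian H\<close>])
    show "\<bar>l\<bar> \<le> Re (qform R u)" if "cinner u u = 1" "eigvec H l u" "l \<noteq> 0" for u l
      using abs_eigval_le_qform[OF \<open>hermitian H\<close> H_skew R_sym _ that] nonneg unfolding A by simp
  qed
  then show ?thesis
    unfolding pairing by (simp add: less_eq_complex_def)
qed

end

theorem theorem5:
  fixes A :: "nat \<Rightarrow> nat \<Rightarrow> complex"
  assumes herm: "\<forall>j\<in>{1..6}. \<forall>k\<in>{1..6}. A k j = cnj (A j k)"
    and psd: "\<forall>z :: nat \<Rightarrow> complex.
               z 1 * z 6 + z 2 * z 5 + z 3 * z 4 = 0 \<longrightarrow>
               (\<Sum>j=1..6. \<Sum>k=1..6. cnj (z j) * A j k * z k) \<ge> 0"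
  shows "(\<Sum>j=1..6. \<Sum>k=1..6. A j k * A (7 - j) (7 - k)) \<ge> 0"
proof -
  interpret coord_involution "{1..6::nat}" "\<lambda>i. 7 - i"
    by unfold_locales auto
  have "hermitian A"
    using herm unfolding hermitian_def by blast
  moreover have "0 \<le> qform A z" if "cinner (conj_flip z) z = 0" for z
  proof -
    have six: "{1..6::nat} = {1, 2, 3, 4, 5, 6}"
      by auto
    have "cinner (conj_flip z) z = 2 * (z 1 * z 6 + z 2 * z 5 + z 3 * z 4)"
      unfolding cinner_def conj_flip_def unfolding six by (simp add: algebra_simps)
    with that have "z 1 * z 6 + z 2 * z 5 + z 3 * z 4 = 0"
      by (metis mult_eq_0_iff zero_neq_numeral)
    moreover have "qform A z = (\<Sum>j=1..6. \<Sum>k=1..6. cnj (z j) * A j k * z k)"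
      unfolding qform_def cinner_def mat_vec_def by (simp add: sum_distrib_left mult.assoc)
    ultimately show ?thesis
      using psd by simp
  qed
  ultimately show ?thesis
    by (rule reflected_pairing_nonneg)
qed

end
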